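(* Let $\theta>0$, $h>0$ and $\mu=\frac12(\delta_{-1}+\delta_{+1})$. For $r\ge0$ and $\Psi\in[0,2\pi)$ let \[ q_{r,\Psi}(x,\eta)=[Z_{r,\Psi}(\eta)]^{-1}\exp\{2\theta r\cos(\Psi-x)+2h\eta\cos x\},\qquad Z_{r,\Psi}(\eta)=\int_0^{2\pi}\exp\{2\theta r\cos(\Psi-x)+2h\eta\cos x\}\,dx, \] and consider the self-consistency relation \[ r e^{i\Psi}=\int_{\{-1,+1\}}\int_0^{2\pi}e^{ix}\,q_{r,\Psi}(x,\eta)\,dx\,\mu(d\eta). \] This relation admits solutions $(r_+,\Psi_+)$ with $r_+>0$ if and only if $\Psi_+\in\{0,\frac{\pi}{2},\pi,\frac{3\pi}{2}\}$. Moreover, $r=r_+$ has to satisfy \[ r=\begin{cases}\dfrac12\left[\dfrac{I_1(2(h+\theta r))}{I_0(2(h+\theta r))}-\dfrac{I_1(2(h-\theta r))}{I_0(2(h-\theta r))}\right] & \text{if } \Psi_+\in\{0,\pi\},\\[3mm] \dfrac{\theta r}{\sqrt{h^2+\theta^2r^2}}\,\dfrac{I_1\big(2\sqrt{h^2+\theta^2r^2}\big)}{I_0\big(2\sqrt{h^2+\theta^2r^2}\big)} & \text{if } \Psi_+\in\{\frac{\pi}{2},\frac{3\pi}{2}\},\end{cases} \] where $I_v(y)=\frac{1}{2\pi}\int_0^{2\pi}\cos(v\alpha)\exp\{y\cos\alpha\}\,d\alpha$ denotes the modified Bessel function of the first kind of order $v$.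
   Context: $\theta>0$ is the coupling strength, $h>0$ the field intensity, $\mu$ the uniform law on $\{-1,+1\}$ of the random field. Solutions $(r,\Psi)$ with $r>0$ are called ferromagnetic. *)

theory Defs
  imports "HOL-Analysis.Analysis"
begin

definition besselI :: "real \<Rightarrow> real \<Rightarrow> real" where
  "besselI v y = (1 / (2 * pi)) * integral {0..2*pi} (\<lambda>a. cos (v * a) * exp (y * cos a))"

definition weight :: "real \<Rightarrow> real \<Rightarrow> real \<Rightarrow> real \<Rightarrow> real \<Rightarrow> real \<Rightarrow> real" where
  "weight \<theta> h r \<Psi> x \<eta> = exp (2 * \<theta> * r * cos (\<Psi> - x) + 2 * h * \<eta> * cos x)"

definition Zpart :: "real \<Rightarrow> real \<Rightarrow> real \<Rightarrow> real \<Rightarrow> real \<Rightarrow> real" where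
  "Zpart \<theta> h r \<Psi> \<eta> = integral {0..2*pi} (\<lambda>x. weight \<theta> h r \<Psi> x \<eta>)"

definition qdens :: "real \<Rightarrow> real \<Rightarrow> real \<Rightarrow> real \<Rightarrow> real \<Rightarrow> real \<Rightarrow> real" where
  "qdens \<theta> h r \<Psi> x \<eta> = weight \<theta> h r \<Psi> x \<eta> / Zpart \<theta> h r \<Psi> \<eta>"

(* Self-consistency relation  r e^{i Psi} = int int e^{ix} q(x,eta) dx mu(d eta),
   with mu = (delta_{-1} + delta_{+1})/2, so the mu-integral is the average over eta = -1, +1. *)
definition self_consistent :: "real \<Rightarrow> real \<Rightarrow> real \<Rightarrow> real \<Rightarrow> bool" where
  "self_consistent \<theta> h r \<Psi> \<longleftrightarrow>
     complex_of_real r * cis \<Psi> =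
       (1/2) * (\<Sum>\<eta>\<in>{-1, 1::real}.
                  integral {0..2*pi} (\<lambda>x. cis x * complex_of_real (qdens \<theta> h r \<Psi> x \<eta>)))"

end

theory Submission
  imports Defs
begin

text \<open>
  Writing the weight as \<open>exp (A cos x + B sin x)\<close> with \<open>A = 2\<theta>r cos \<Psi> + 2h\<eta>\<close>,
  \<open>B = 2\<theta>r sin \<Psi>\<close>, a rotation of the circle shows that the mean of \<open>e\<^sup>i\<^sup>x\<close> is
  \<open>(A + iB) \<kappa>(\<surd>(A\<^sup>2 + B\<^sup>2))\<close> with \<open>\<kappa>(R) = I\<^sub>1(R) / (R I\<^sub>0(R))\<close>. Writing \<open>\<kappa>\<^sub>p, \<kappa>\<^sub>m\<close> for the
  values belonging to \<open>\<eta> = 1, -1\<close>, the self-consistency relation splits into \<open>r cos \<Psi> = \<theta>r cos \<Psi> (\<kappa>\<^sub>p + \<kappa>\<^sub>m) + h (\<kappa>\<^sub>p - \<kappa>\<^sub>m)\<close> and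
  \<open>r sin \<Psi> = \<theta>r sin \<Psi> (\<kappa>\<^sub>p + \<kappa>\<^sub>m)\<close>. If neither \<open>sin \<Psi>\<close> nor \<open>cos \<Psi>\<close> vanishes, this forces
  \<open>\<kappa>\<^sub>p = \<kappa>\<^sub>m\<close>, which is impossible because \<open>\<kappa>\<close> is strictly decreasing on \<open>(0, \<infinity>)\<close>
  while the two arguments differ. Strict monotonicity of \<open>\<kappa>\<close> is a Chebyshev-type inequality,
  proved by symmetrising a double integral over the torus.
\<close>

lemma integrable_continuous_UNIV:
  fixes f :: "real \<Rightarrow> real"
  assumes "continuous_on UNIV f"
  shows "f integrable_on {a..b}"
  using assms by (intro integrable_continuous_interval continuous_on_subset[OF assms]) simp

lemma integral_lincomb:
  fixes f g :: "real \<Rightarrow> real"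
  assumes "continuous_on UNIV f" "continuous_on UNIV g"
  shows "integral {a..b} (\<lambda>x. c * f x + d * g x) = c * integral {a..b} f + d * integral {a..b} g"
proof -
  have "f integrable_on {a..b}" "g integrable_on {a..b}"
    using assms by (auto intro: integrable_continuous_UNIV)
  then show ?thesis
    by (simp add: integral_add integrable_on_mult_right)
qed

lemma integral_periodic_shift:
  fixes g :: "real \<Rightarrow> real"
  assumes cont: "continuous_on UNIV g" and per: "\<And>x. g (x + 2*pi) = g x"
    and t: "\<bar>t\<bar> \<le> 2*pi"
  shows "integral {0..2*pi} (\<lambda>x. g (x + t)) = integral {0..2*pi} g"
proof -
  have int: "g integrable_on {a..b}" for a b
    by (rule integrable_continuous_UNIV[OF cont])
  have nonneg: "integral {0..2*pi} (\<lambda>x. g (x + s)) = integral {0..2*pi} g"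
    if s: "0 \<le> s" "s \<le> 2*pi" for s
  proof -
    have "integral {0..2*pi} (\<lambda>x. g (x + s)) = integral {s..2*pi+s} g"
      using integral_shift_real_ivl[where a = s and b = "2*pi+s" and c = s and f = g] by simp
    also have "\<dots> = integral {s..2*pi} g + integral {2*pi..2*pi+s} g"
      using Henstock_Kurzweil_Integration.integral_combine[where a = s and c = "2*pi" and b = "2*pi+s" and f = g] s int by simp
    also have "integral {2*pi..2*pi+s} g = integral {0..s} g"
      using integral_shift_real_ivl[where a = "2*pi" and b = "2*pi+s" and c = "2*pi" and f = g] per by simp
    also have "integral {s..2*pi} g + integral {0..s} g = integral {0..2*pi} g"
      using Henstock_Kurzweil_Integration.integral_combine[where a = 0 and c = s and b = "2*pi" and f = g] s int by simp
    finally show ?thesis .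
  qed
  show ?thesis
  proof (cases "t \<ge> 0")
    case True
    then show ?thesis using nonneg t by simp
  next
    case False
    have "g (x + t) = g (x + (t + 2*pi))" for x
      using per[of "x + t"] by (simp add: add.assoc)
    then show ?thesis using nonneg[of "t + 2*pi"] False t by simp
  qed
qed

lemma has_integral_periodic_derivative:
  fixes F f :: "real \<Rightarrow> real"
  assumes "\<And>x. (F has_real_derivative f x) (at x)" and "F (2*pi) = F 0"
  shows "(f has_integral 0) {0..2*pi}"
proof -
  have "(f has_integral (F (2*pi) - F 0)) {0..2*pi}"
    using assms(1)
    by (intro fundamental_theorem_of_calculus)
       (auto intro: has_field_derivative_at_within simp: has_real_derivative_iff_has_vector_derivative[symmetric])
  then show ?thesis using assms(2) by simp
qed

section \<open>Von Mises weights on the circle\<close>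

definition vonmises :: "real \<Rightarrow> real \<Rightarrow> real \<Rightarrow> real" where
  "vonmises A B x = exp (A * cos x + B * sin x)"

definition vonmises_mass :: "real \<Rightarrow> real \<Rightarrow> real" where
  "vonmises_mass A B = integral {0..2*pi} (vonmises A B)"

definition vonmises_cos :: "real \<Rightarrow> real \<Rightarrow> real" where
  "vonmises_cos A B = integral {0..2*pi} (\<lambda>x. cos x * vonmises A B x)"

definition vonmises_sin :: "real \<Rightarrow> real \<Rightarrow> real" where
  "vonmises_sin A B = integral {0..2*pi} (\<lambda>x. sin x * vonmises A B x)"

lemma continuous_on_vonmises [continuous_intros]:
  assumes "continuous_on S f"
  shows "continuous_on S (\<lambda>x. vonmises A B (f x))"
proof -
  have "continuous_on (f ` S) (vonmises A B)"
    unfolding vonmises_def by (intro continuous_intros)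
  from continuous_on_compose[OF assms this] show ?thesis
    by (simp add: o_def)
qed

lemma vonmises_periodic: "vonmises A B (x + 2*pi) = vonmises A B x"
  unfolding vonmises_def by simp

lemma vonmises_polar: "vonmises (R * cos \<phi>) (R * sin \<phi>) x = vonmises R 0 (x - \<phi>)"
  unfolding vonmises_def by (simp add: cos_diff algebra_simps)

lemma vonmises_mass_pos: "vonmises_mass A B > 0"
proof -
  have cont: "continuous_on S (vonmises A B)" for S
    unfolding vonmises_def by (intro continuous_intros)
  have "integral {0..2*pi} (vonmises A B) \<noteq> 0"
    using integral_eq_0_iff[of 0 "2*pi" "vonmises A B"] cont by (auto simp: vonmises_def)
  moreover have "integral {0..2*pi} (vonmises A B) \<ge> 0"
    using cont by (intro integral_nonneg integrable_continuous_UNIV) (auto simp: vonmises_def)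
  ultimately show ?thesis
    unfolding vonmises_mass_def by linarith
qed

lemma vonmises_sin_axis: "vonmises_sin R 0 = 0"
proof -
  have "((\<lambda>x. R * (sin x * vonmises R 0 x)) has_integral 0) {0..2*pi}"
    by (rule has_integral_periodic_derivative[where F = "\<lambda>x. - vonmises R 0 x"])
       (auto simp: vonmises_def intro!: derivative_eq_intros)
  moreover have "((\<lambda>x. sin x) has_integral 0) {0..2*pi}"
    by (rule has_integral_periodic_derivative[where F = "\<lambda>x. - cos x"])
       (auto intro!: derivative_eq_intros)
  moreover have "(\<lambda>x. sin x * vonmises R 0 x) integrable_on {0..2*pi}"
    by (intro integrable_continuous_UNIV continuous_intros)
  ultimately show ?thesis
    unfolding vonmises_sin_def
    by (cases "R = 0") (auto simp: vonmises_def dest: integral_unique)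
qed

lemma vonmises_cos_origin: "vonmises_cos 0 0 = 0"
proof -
  have "(cos has_integral 0) {0..2*pi}"
    by (rule has_integral_periodic_derivative[where F = sin]) (auto intro!: derivative_eq_intros)
  then show ?thesis
    unfolding vonmises_cos_def vonmises_def by (simp add: integral_unique)
qed

lemma vonmises_rotate:
  assumes "\<bar>\<phi>\<bar> \<le> 2*pi"
  shows "vonmises_mass (R * cos \<phi>) (R * sin \<phi>) = vonmises_mass R 0"
    and "vonmises_cos (R * cos \<phi>) (R * sin \<phi>) = cos \<phi> * vonmises_cos R 0"
    and "vonmises_sin (R * cos \<phi>) (R * sin \<phi>) = sin \<phi> * vonmises_cos R 0"
proof -
  have shift: "integral {0..2*pi} (\<lambda>x. g (x - \<phi>)) = integral {0..2*pi} g"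
    if "continuous_on UNIV g" "\<And>x. g (x + 2*pi) = g x" for g :: "real \<Rightarrow> real"
    using integral_periodic_shift[OF that, of "- \<phi>"] assms by simp
  have per: "f (y + 2*pi + \<phi>) * vonmises R 0 (y + 2*pi) = f (y + \<phi>) * vonmises R 0 y"
    if "\<And>x. f (x + 2*pi) = f x" for f :: "real \<Rightarrow> real" and y
    using that[of "y + \<phi>"] vonmises_periodic[of R 0 y] by (simp add: add_ac)
  have cc: "continuous_on UNIV (\<lambda>y. cos y * vonmises R 0 y)"
    and cs: "continuous_on UNIV (\<lambda>y. sin y * vonmises R 0 y)"
    by (intro continuous_intros)+
  show "vonmises_mass (R * cos \<phi>) (R * sin \<phi>) = vonmises_mass R 0"
    unfolding vonmises_mass_def vonmises_polar
    by (rule shift) (auto intro: continuous_intros vonmises_periodic)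
  have "vonmises_cos (R * cos \<phi>) (R * sin \<phi>)
      = integral {0..2*pi} (\<lambda>y. cos (y + \<phi>) * vonmises R 0 y)"
    unfolding vonmises_cos_def vonmises_polar
    using shift[of "\<lambda>y. cos (y + \<phi>) * vonmises R 0 y"] per[of cos]
    by (simp add: continuous_intros)
  also have "\<dots> = integral {0..2*pi} (\<lambda>y. cos \<phi> * (cos y * vonmises R 0 y) + (- sin \<phi>) * (sin y * vonmises R 0 y))"
    by (simp add: cos_add algebra_simps)
  also have "\<dots> = cos \<phi> * vonmises_cos R 0"
    using integral_lincomb[OF cc cs, of 0 "2*pi" "cos \<phi>" "- sin \<phi>"] vonmises_sin_axis[of R]
    by (simp add: vonmises_cos_def vonmises_sin_def)
  finally show "vonmises_cos (R * cos \<phi>) (R * sin \<phi>) = cos \<phi> * vonmises_cos R 0" .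
  have "vonmises_sin (R * cos \<phi>) (R * sin \<phi>)
      = integral {0..2*pi} (\<lambda>y. sin (y + \<phi>) * vonmises R 0 y)"
    unfolding vonmises_sin_def vonmises_polar
    using shift[of "\<lambda>y. sin (y + \<phi>) * vonmises R 0 y"] per[of sin]
    by (simp add: continuous_intros)
  also have "\<dots> = integral {0..2*pi} (\<lambda>y. sin \<phi> * (cos y * vonmises R 0 y) + cos \<phi> * (sin y * vonmises R 0 y))"
    by (simp add: sin_add algebra_simps)
  also have "\<dots> = sin \<phi> * vonmises_cos R 0"
    using integral_lincomb[OF cc cs] vonmises_sin_axis[of R]
    by (simp add: vonmises_cos_def vonmises_sin_def)
  finally show "vonmises_sin (R * cos \<phi>) (R * sin \<phi>) = sin \<phi> * vonmises_cos R 0" .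
qed

text \<open>\<open>\<kappa> R = I\<^sub>1(R) / (R I\<^sub>0(R))\<close>; at \<open>R = 0\<close> division by zero makes it \<open>0\<close>.\<close>

definition kappa :: "real \<Rightarrow> real" where
  "kappa R = vonmises_cos R 0 / (R * vonmises_mass R 0)"

lemma vonmises_moments_div_mass:
  fixes A B :: real
  defines "R \<equiv> sqrt (A\<^sup>2 + B\<^sup>2)"
  shows "vonmises_cos A B / vonmises_mass A B = A * kappa R"
    and "vonmises_sin A B / vonmises_mass A B = B * kappa R"
proof -
  define \<phi> where "\<phi> = Arg (Complex A B)"
  have AB: "A = R * cos \<phi>" "B = R * sin \<phi>"
    using rcis_cmod_Arg[of "Complex A B"]
    by (auto simp: \<phi>_def R_def cmod_def complex_eq_iff)
  have "\<bar>\<phi>\<bar> \<le> 2*pi"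
    using Arg_bounded[of "Complex A B"] pi_gt_zero unfolding \<phi>_def by linarith
  note rot = vonmises_rotate[OF this, of R, folded AB]
  have "vonmises_mass R 0 > 0"
    by (rule vonmises_mass_pos)
  then show "vonmises_cos A B / vonmises_mass A B = A * kappa R"
    and "vonmises_sin A B / vonmises_mass A B = B * kappa R"
    unfolding rot kappa_def
    by (cases "R = 0"; simp add: AB vonmises_cos_origin)+
qed

lemma besselI_ratio: "besselI 1 y / besselI 0 y = y * kappa \<bar>y\<bar>"
  using vonmises_moments_div_mass(1)[of y 0]
  unfolding besselI_def vonmises_cos_def vonmises_mass_def vonmises_def[abs_def] by simp

section \<open>Strict monotonicity of \<open>\<kappa>\<close>\<close>

definition torus_integral :: "(real \<Rightarrow> real \<Rightarrow> real) \<Rightarrow> real" where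
  "torus_integral G = integral {0..2*pi} (\<lambda>x. integral {0..2*pi} (G x))"

lemma continuous_on_case_prod_compose:
  fixes G u v :: "real \<Rightarrow> real \<Rightarrow> real"
  assumes "continuous_on UNIV (\<lambda>(x, y). G x y)"
    and "continuous_on UNIV (\<lambda>(x, y). u x y)" and "continuous_on UNIV (\<lambda>(x, y). v x y)"
  shows "continuous_on UNIV (\<lambda>(x, y). G (u x y) (v x y))"
proof -
  have "continuous_on UNIV (\<lambda>p. (u (fst p) (snd p), v (fst p) (snd p)))"
    using assms(2,3) unfolding case_prod_beta' by (intro continuous_on_Pair)
  from continuous_on_compose2[OF assms(1) this] show ?thesis
    unfolding case_prod_beta' by simp
qed

lemma continuous_on_slice:
  fixes G :: "real \<Rightarrow> real \<Rightarrow> real"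
  assumes "continuous_on UNIV (\<lambda>(x, y). G x y)"
  shows "continuous_on UNIV (G c)" and "continuous_on UNIV (\<lambda>x. G x c)"
proof -
  have "continuous_on UNIV (\<lambda>y::real. (c, y))" "continuous_on UNIV (\<lambda>x::real. (x, c))"
    by (intro continuous_intros)+
  then show "continuous_on UNIV (G c)" and "continuous_on UNIV (\<lambda>x. G x c)"
    using continuous_on_compose2[OF assms] by force+
qed

lemma continuous_on_integral_slice:
  fixes G :: "real \<Rightarrow> real \<Rightarrow> real"
  assumes "continuous_on UNIV (\<lambda>(x, y). G x y)"
  shows "continuous_on UNIV (\<lambda>x. integral {0..2*pi} (G x))"
  using integral_continuous_on_param[of UNIV 0 "2*pi" G] continuous_on_subset[OF assms] by simp

lemma torus_integral_swap:
  fixes G :: "real \<Rightarrow> real \<Rightarrow> real"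
  assumes "continuous_on UNIV (\<lambda>(x, y). G x y)"
  shows "torus_integral (\<lambda>x y. G y x) = torus_integral G"
  using integral_swap_continuous[of 0 0 "2*pi" "2*pi" G] continuous_on_subset[OF assms]
  unfolding torus_integral_def by simp

lemma torus_integral_lincomb:
  fixes G H :: "real \<Rightarrow> real \<Rightarrow> real"
  assumes "continuous_on UNIV (\<lambda>(x, y). G x y)" "continuous_on UNIV (\<lambda>(x, y). H x y)"
  shows "torus_integral (\<lambda>x y. a * G x y + b * H x y) = a * torus_integral G + b * torus_integral H"
  unfolding torus_integral_def
  using integral_lincomb[OF continuous_on_slice(1)[OF assms(1)] continuous_on_slice(1)[OF assms(2)]]
    integral_lincomb[OF continuous_on_integral_slice[OF assms(1)] continuous_on_integral_slice[OF assms(2)]]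
  by simp

lemma torus_integral_product:
  fixes f g :: "real \<Rightarrow> real"
  assumes "continuous_on UNIV f" "continuous_on UNIV g"
  shows "torus_integral (\<lambda>x y. f x * g y) = integral {0..2*pi} f * integral {0..2*pi} g"
  using integrable_continuous_UNIV[OF assms(1)] integrable_continuous_UNIV[OF assms(2)]
  unfolding torus_integral_def by (simp add: mult.commute)

lemma torus_integral_shift_pi:
  fixes G :: "real \<Rightarrow> real \<Rightarrow> real"
  assumes cont: "continuous_on UNIV (\<lambda>(x, y). G x y)"
    and per: "\<And>x y. G (x + 2*pi) y = G x y" "\<And>x y. G x (y + 2*pi) = G x y"
  shows "torus_integral (\<lambda>x y. G (x + pi) (y + pi)) = torus_integral G"
proof -
  have pi: "\<bar>pi\<bar> \<le> 2*pi" by simp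
  have cont_shift: "continuous_on UNIV (\<lambda>(x, y). G (x + pi) y)"
    by (rule continuous_on_case_prod_compose[OF cont]) (simp_all add: case_prod_beta' continuous_intros)
  have "torus_integral (\<lambda>x y. G (x + pi) (y + pi)) = torus_integral (\<lambda>x y. G (x + pi) y)"
    unfolding torus_integral_def
    using integral_periodic_shift[OF continuous_on_slice(1)[OF cont] per(2) pi] by simp
  also have "\<dots> = torus_integral (\<lambda>x y. G (y + pi) x)"
    using torus_integral_swap[OF cont_shift] by simp
  also have "\<dots> = torus_integral (\<lambda>x y. G y x)"
    unfolding torus_integral_def
    using integral_periodic_shift[OF continuous_on_slice(2)[OF cont] per(1) pi] by simp
  also have "\<dots> = torus_integral G"
    by (rule torus_integral_swap[OF cont])
  finally show ?thesis .
qed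

lemma torus_integral_symmetrize:
  fixes G :: "real \<Rightarrow> real \<Rightarrow> real"
  assumes cont: "continuous_on UNIV (\<lambda>(x, y). G x y)"
    and per: "\<And>x y. G (x + 2*pi) y = G x y" "\<And>x y. G x (y + 2*pi) = G x y"
  shows "torus_integral (\<lambda>x y. G x y + G y x + G (x + pi) (y + pi) + G (y + pi) (x + pi))
    = 4 * torus_integral G"
proof -
  define G' where "G' x y = G x y + G y x" for x y
  have cont': "continuous_on UNIV (\<lambda>(x, y). G' x y)"
    using continuous_on_case_prod_compose[OF cont, of "\<lambda>_ y. y" "\<lambda>x _. x"] cont
    unfolding G'_def case_prod_beta' by (intro continuous_intros) (simp_all add: continuous_intros)
  have cont'_shift: "continuous_on UNIV (\<lambda>(x, y). G' (x + pi) (y + pi))"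
    by (rule continuous_on_case_prod_compose[OF cont']) (simp_all add: case_prod_beta' continuous_intros)
  have "torus_integral G' = 2 * torus_integral G"
    using torus_integral_lincomb[OF cont continuous_on_case_prod_compose[OF cont], of "\<lambda>_ y. y" "\<lambda>x _. x" 1 1]
      torus_integral_swap[OF cont]
    unfolding G'_def by (simp add: case_prod_beta' continuous_intros)
  moreover have "torus_integral (\<lambda>x y. G' (x + pi) (y + pi)) = torus_integral G'"
    by (rule torus_integral_shift_pi[OF cont']) (simp_all add: G'_def per)
  ultimately show ?thesis
    using torus_integral_lincomb[OF cont' cont'_shift, of 1 1]
    unfolding G'_def by (simp add: add.assoc)
qed

lemma torus_integral_pos:
  fixes G :: "real \<Rightarrow> real \<Rightarrow> real"
  assumes cont: "continuous_on UNIV (\<lambda>(x, y). G x y)"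
    and nonneg: "\<And>x y. G x y \<ge> 0" and pos: "G x\<^sub>0 y\<^sub>0 > 0"
    and "x\<^sub>0 \<in> {0..2*pi}" "y\<^sub>0 \<in> {0..2*pi}"
  shows "torus_integral G > 0"
proof -
  have pos_integral: "integral {0..2*pi} f > 0"
    if "continuous_on UNIV f" "\<And>x. f x \<ge> 0" "f z > 0" "z \<in> {0..2*pi}" for f :: "real \<Rightarrow> real" and z
  proof -
    have "integral {0..2*pi} f \<noteq> 0"
      using integral_eq_0_iff[of 0 "2*pi" f] that continuous_on_subset[OF that(1)] by force
    moreover have "integral {0..2*pi} f \<ge> 0"
      using that by (intro integral_nonneg integrable_continuous_UNIV) auto
    ultimately show ?thesis by linarith
  qed
  have "integral {0..2*pi} (G x) \<ge> 0" for x
    using continuous_on_slice(1)[OF cont] nonneg by (intro integral_nonneg integrable_continuous_UNIV) auto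
  moreover have "integral {0..2*pi} (G x\<^sub>0) > 0"
    using pos_integral[OF continuous_on_slice(1)[OF cont]] nonneg pos assms by blast
  ultimately show ?thesis
    unfolding torus_integral_def
    using pos_integral[OF continuous_on_integral_slice[OF cont]] assms by blast
qed

lemma cosh_cross_nonneg:
  fixes R S a b :: real
  assumes "0 \<le> R" "R \<le> S"
  shows "(b\<^sup>2 - a\<^sup>2) * (cosh (R * a + S * b) - cosh (R * b + S * a)) \<ge> 0"
proof -
  have cosh_mono: "cosh v \<le> cosh u" if "v\<^sup>2 \<le> u\<^sup>2" for u v :: real
  proof -
    have "\<bar>v\<bar> \<le> \<bar>u\<bar>"
      using that abs_le_square_iff by blast
    then show ?thesis
      using cosh_real_nonneg_le_iff[of "\<bar>v\<bar>" "\<bar>u\<bar>"] by simp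
  qed
  have key: "(R * a + S * b)\<^sup>2 - (R * b + S * a)\<^sup>2 = (S\<^sup>2 - R\<^sup>2) * (b\<^sup>2 - a\<^sup>2)"
    by (simp add: power2_eq_square algebra_simps)
  have "S\<^sup>2 - R\<^sup>2 \<ge> 0"
    using assms by (simp add: power_mono)
  then show ?thesis
  proof (cases "a\<^sup>2 \<le> b\<^sup>2")
    case True
    then have "cosh (R * b + S * a) \<le> cosh (R * a + S * b)"
      using key \<open>S\<^sup>2 - R\<^sup>2 \<ge> 0\<close> by (intro cosh_mono) (smt (verit) mult_nonneg_nonneg)
    with True show ?thesis by simp
  next
    case False
    then have "cosh (R * a + S * b) \<le> cosh (R * b + S * a)"
      using key \<open>S\<^sup>2 - R\<^sup>2 \<ge> 0\<close> by (intro cosh_mono) (smt (verit) mult_nonneg_nonpos)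
    with False show ?thesis by (intro mult_nonpos_nonpos) auto
  qed
qed

definition vonmises_sin2 :: "real \<Rightarrow> real" where
  "vonmises_sin2 R = integral {0..2*pi} (\<lambda>x. (sin x)\<^sup>2 * vonmises R 0 x)"

lemma vonmises_cos_axis: "vonmises_cos R 0 = R * vonmises_sin2 R"
proof -
  have "((\<lambda>x. 1 * (cos x * vonmises R 0 x) + (- R) * ((sin x)\<^sup>2 * vonmises R 0 x)) has_integral 0) {0..2*pi}"
    by (rule has_integral_periodic_derivative[where F = "\<lambda>x. sin x * vonmises R 0 x"])
       (auto simp: vonmises_def power2_eq_square algebra_simps intro!: derivative_eq_intros)
  moreover have "continuous_on UNIV (\<lambda>x. cos x * vonmises R 0 x)"
    "continuous_on UNIV (\<lambda>x. (sin x)\<^sup>2 * vonmises R 0 x)"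
    by (intro continuous_intros)+
  then have "integral {0..2*pi} (\<lambda>x. 1 * (cos x * vonmises R 0 x) + (- R) * ((sin x)\<^sup>2 * vonmises R 0 x))
      = vonmises_cos R 0 - R * vonmises_sin2 R"
    unfolding vonmises_cos_def vonmises_sin2_def by (subst integral_lincomb) auto
  ultimately show ?thesis
    by (simp add: integral_unique)
qed

text \<open>
  Symmetrising the cross term \<open>V\<close> over the swap \<open>x \<leftrightarrow> y\<close> and the antipodal map
  \<open>(x, y) \<mapsto> (x + \<pi>, y + \<pi>)\<close> turns it into the nonnegative kernel \<open>Q\<close>.
\<close>

lemma vonmises_sin2_cross_pos:
  assumes "0 \<le> R" "R < S"
  shows "vonmises_sin2 S * vonmises_mass R 0 < vonmises_sin2 R * vonmises_mass S 0"
proof -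
  define V where "V x y = ((sin x)\<^sup>2 - (sin y)\<^sup>2) * (vonmises R 0 x * vonmises S 0 y)" for x y
  have cont: "continuous_on UNIV (\<lambda>(x, y). V x y)"
    unfolding V_def case_prod_beta' by (intro continuous_intros)
  have "torus_integral V
      = torus_integral (\<lambda>x y. 1 * ((sin x)\<^sup>2 * vonmises R 0 x * vonmises S 0 y)
                             + (- 1) * ((sin y)\<^sup>2 * vonmises S 0 y * vonmises R 0 x))"
    unfolding V_def by (simp add: algebra_simps)
  also have "\<dots> = vonmises_sin2 R * vonmises_mass S 0 - vonmises_sin2 S * vonmises_mass R 0"
    using torus_integral_lincomb[of "\<lambda>x y. (sin x)\<^sup>2 * vonmises R 0 x * vonmises S 0 y"
        "\<lambda>x y. (sin y)\<^sup>2 * vonmises S 0 y * vonmises R 0 x" 1 "- 1"]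
      torus_integral_swap[of "\<lambda>x y. (sin x)\<^sup>2 * vonmises S 0 x * vonmises R 0 y"]
      torus_integral_product[of "\<lambda>x. (sin x)\<^sup>2 * vonmises R 0 x" "vonmises S 0"]
      torus_integral_product[of "\<lambda>x. (sin x)\<^sup>2 * vonmises S 0 x" "vonmises R 0"]
    unfolding vonmises_sin2_def vonmises_mass_def case_prod_beta'
    by (simp add: continuous_intros)
  finally have V: "torus_integral V = vonmises_sin2 R * vonmises_mass S 0 - vonmises_sin2 S * vonmises_mass R 0" .
  define Q where "Q x y = 2 * (((cos y)\<^sup>2 - (cos x)\<^sup>2)
      * (cosh (R * cos x + S * cos y) - cosh (R * cos y + S * cos x)))" for x y
  have "V x y + V y x + V (x + pi) (y + pi) + V (y + pi) (x + pi) = Q x y" for x y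
    unfolding V_def Q_def vonmises_def cosh_field_def
    by (simp add: exp_add[symmetric] exp_minus sin_squared_eq field_simps)
  moreover have "V (x + 2*pi) y = V x y" "V x (y + 2*pi) = V x y" for x y
    unfolding V_def by (simp_all add: vonmises_periodic)
  ultimately have "torus_integral Q = 4 * torus_integral V"
    using torus_integral_symmetrize[OF cont] by simp
  moreover have "torus_integral Q > 0"
  proof (rule torus_integral_pos)
    show "continuous_on UNIV (\<lambda>(x, y). Q x y)"
      unfolding Q_def case_prod_beta' by (intro continuous_intros)
    show "Q x y \<ge> 0" for x y
      using cosh_cross_nonneg[of R S "cos y" "cos x"] assms unfolding Q_def by simp
    show "Q 0 (pi/2) > 0"
      using cosh_real_nonneg_less_iff[of R S] assms unfolding Q_def by simp
  qed auto
  ultimately show ?thesis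
    using V by simp
qed

lemma kappa_eq_vonmises_sin2: "R \<noteq> 0 \<Longrightarrow> kappa R = vonmises_sin2 R / vonmises_mass R 0"
  unfolding kappa_def vonmises_cos_axis by simp

lemma kappa_strict_decreasing:
  assumes "0 < R" "R < S"
  shows "kappa S < kappa R"
  using vonmises_sin2_cross_pos[of R S] vonmises_mass_pos[of R 0] vonmises_mass_pos[of S 0] assms
  by (simp add: kappa_eq_vonmises_sin2 divide_simps)

lemma inj_on_kappa: "inj_on kappa {0<..}"
  by (rule inj_onI) (metis greaterThan_iff kappa_strict_decreasing less_irrefl linorder_cases)

section \<open>The self-consistency relation\<close>

lemma has_integral_cis_vonmises:
  "((\<lambda>x. cis x * complex_of_real (vonmises A B x / Z))
      has_integral Complex (vonmises_cos A B / Z) (vonmises_sin A B / Z)) {0..2*pi}"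
proof -
  have "((\<lambda>x. cos x * vonmises A B x) has_integral vonmises_cos A B) {0..2*pi}"
    "((\<lambda>x. sin x * vonmises A B x) has_integral vonmises_sin A B) {0..2*pi}"
    unfolding vonmises_cos_def vonmises_sin_def
    by (intro integrable_integral integrable_continuous_UNIV continuous_intros)+
  then have "((\<lambda>x. complex_of_real (cos x * vonmises A B x / Z)
                + \<i> * complex_of_real (sin x * vonmises A B x / Z))
      has_integral complex_of_real (vonmises_cos A B / Z) + \<i> * complex_of_real (vonmises_sin A B / Z))
      {0..2*pi}"
    by (intro has_integral_add has_integral_mult_right has_integral_of_real has_integral_divide)
  moreover have "complex_of_real (cos x * vonmises A B x / Z) + \<i> * complex_of_real (sin x * vonmises A B x / Z)
      = cis x * complex_of_real (vonmises A B x / Z)" for x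
    by (simp add: complex_eq_iff)
  moreover have "complex_of_real (vonmises_cos A B / Z) + \<i> * complex_of_real (vonmises_sin A B / Z)
      = Complex (vonmises_cos A B / Z) (vonmises_sin A B / Z)"
    by (simp add: complex_eq_iff)
  ultimately show ?thesis
    by simp
qed

lemma self_consistent_iff_kappa:
  fixes \<theta> h r \<Psi> :: real
  defines "A\<^sub>p \<equiv> 2 * \<theta> * r * cos \<Psi> + 2 * h" and "A\<^sub>m \<equiv> 2 * \<theta> * r * cos \<Psi> - 2 * h"
    and "B \<equiv> 2 * \<theta> * r * sin \<Psi>"
  defines "\<kappa>\<^sub>p \<equiv> kappa (sqrt (A\<^sub>p\<^sup>2 + B\<^sup>2))" and "\<kappa>\<^sub>m \<equiv> kappa (sqrt (A\<^sub>m\<^sup>2 + B\<^sup>2))"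
  shows "self_consistent \<theta> h r \<Psi> \<longleftrightarrow>
    r * cos \<Psi> = (A\<^sub>p * \<kappa>\<^sub>p + A\<^sub>m * \<kappa>\<^sub>m) / 2 \<and> r * sin \<Psi> = B * (\<kappa>\<^sub>p + \<kappa>\<^sub>m) / 2"
proof -
  define A where "A \<eta> = 2 * \<theta> * r * cos \<Psi> + 2 * h * \<eta>" for \<eta>
  have weight: "weight \<theta> h r \<Psi> x \<eta> = vonmises (A \<eta>) B x" for x \<eta>
    unfolding weight_def vonmises_def B_def A_def by (simp add: cos_diff algebra_simps)
  have "integral {0..2*pi} (\<lambda>x. cis x * complex_of_real (qdens \<theta> h r \<Psi> x \<eta>))
      = Complex (A \<eta> * kappa (sqrt ((A \<eta>)\<^sup>2 + B\<^sup>2))) (B * kappa (sqrt ((A \<eta>)\<^sup>2 + B\<^sup>2)))" for \<eta>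
    unfolding qdens_def Zpart_def weight
    using integral_unique[OF has_integral_cis_vonmises] vonmises_moments_div_mass
    by (simp add: vonmises_mass_def)
  moreover have "A 1 = A\<^sub>p" "A (-1) = A\<^sub>m"
    unfolding A_def A\<^sub>p_def A\<^sub>m_def by simp_all
  ultimately show ?thesis
    unfolding self_consistent_def \<kappa>\<^sub>p_def \<kappa>\<^sub>m_def by (simp add: complex_eq_iff field_simps)
qed

lemma self_consistent_sin_eq_0:
  fixes \<theta> h r \<Psi> :: real
  assumes "sin \<Psi> = 0"
  shows "self_consistent \<theta> h r \<Psi> \<longleftrightarrow>
    r = (h + \<theta> * r) * kappa \<bar>2 * (h + \<theta> * r)\<bar> - (h - \<theta> * r) * kappa \<bar>2 * (h - \<theta> * r)\<bar>"
proof -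
  have cos: "cos \<Psi> = 1 \<or> cos \<Psi> = -1"
    using sin_zero_abs_cos_one[OF assms] by linarith
  then have "((2 * \<theta> * r * cos \<Psi> + 2 * h) * kappa \<bar>2 * \<theta> * r * cos \<Psi> + 2 * h\<bar>
       + (2 * \<theta> * r * cos \<Psi> - 2 * h) * kappa \<bar>2 * \<theta> * r * cos \<Psi> - 2 * h\<bar>) / 2
      = cos \<Psi> * ((h + \<theta> * r) * kappa \<bar>2 * (h + \<theta> * r)\<bar> - (h - \<theta> * r) * kappa \<bar>2 * (h - \<theta> * r)\<bar>)"
    (is "_ = cos \<Psi> * ?\<rho>")
    by (elim disjE) (simp_all add: abs_minus_commute field_simps)
  then have "self_consistent \<theta> h r \<Psi> \<longleftrightarrow> r * cos \<Psi> = cos \<Psi> * ?\<rho>"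
    unfolding self_consistent_iff_kappa using assms by simp
  with cos show ?thesis
    by auto
qed

lemma self_consistent_cos_eq_0:
  fixes \<theta> h r \<Psi> :: real
  assumes "cos \<Psi> = 0"
  shows "self_consistent \<theta> h r \<Psi> \<longleftrightarrow> r = 2 * \<theta> * r * kappa (2 * sqrt (h\<^sup>2 + \<theta>\<^sup>2 * r\<^sup>2))"
proof -
  have sin: "sin \<Psi> = 1 \<or> sin \<Psi> = -1"
    using sin_cos_squared_add[of \<Psi>] assms by (simp add: power2_eq_1_iff)
  have "sqrt ((2 * h)\<^sup>2 + (2 * \<theta> * r * sin \<Psi>)\<^sup>2) = 2 * sqrt (h\<^sup>2 + \<theta>\<^sup>2 * r\<^sup>2)"
    using sin real_sqrt_mult[of 4 "h\<^sup>2 + \<theta>\<^sup>2 * r\<^sup>2"] by (auto simp: power_mult_distrib algebra_simps)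
  then show ?thesis
    using sin assms unfolding self_consistent_iff_kappa by auto
qed

lemma not_self_consistent_off_axes:
  fixes \<theta> h r \<Psi> :: real
  assumes "\<theta> > 0" "h > 0" "r > 0" "sin \<Psi> \<noteq> 0" "cos \<Psi> \<noteq> 0"
  shows "\<not> self_consistent \<theta> h r \<Psi>"
proof
  define A\<^sub>p where "A\<^sub>p = 2 * \<theta> * r * cos \<Psi> + 2 * h"
  define A\<^sub>m where "A\<^sub>m = 2 * \<theta> * r * cos \<Psi> - 2 * h"
  define B where "B = 2 * \<theta> * r * sin \<Psi>"
  define \<kappa>\<^sub>p where "\<kappa>\<^sub>p = kappa (sqrt (A\<^sub>p\<^sup>2 + B\<^sup>2))"
  define \<kappa>\<^sub>m where "\<kappa>\<^sub>m = kappa (sqrt (A\<^sub>m\<^sup>2 + B\<^sup>2))"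
  assume "self_consistent \<theta> h r \<Psi>"
  then have cos_eq: "r * cos \<Psi> = (A\<^sub>p * \<kappa>\<^sub>p + A\<^sub>m * \<kappa>\<^sub>m) / 2"
    and sin_eq: "r * sin \<Psi> = B * (\<kappa>\<^sub>p + \<kappa>\<^sub>m) / 2"
    unfolding self_consistent_iff_kappa A\<^sub>p_def A\<^sub>m_def B_def \<kappa>\<^sub>p_def \<kappa>\<^sub>m_def by auto
  have "\<theta> * (\<kappa>\<^sub>p + \<kappa>\<^sub>m) = 1"
    using sin_eq assms by (simp add: B_def)
  moreover have "r * cos \<Psi> = r * cos \<Psi> * (\<theta> * (\<kappa>\<^sub>p + \<kappa>\<^sub>m)) + h * (\<kappa>\<^sub>p - \<kappa>\<^sub>m)"
    using cos_eq by (simp add: A\<^sub>p_def A\<^sub>m_def algebra_simps)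
  ultimately have "\<kappa>\<^sub>p = \<kappa>\<^sub>m"
    using assms by simp
  have "B \<noteq> 0"
    using assms by (simp add: B_def)
  then have "sqrt (A\<^sub>p\<^sup>2 + B\<^sup>2) \<in> {0<..}" "sqrt (A\<^sub>m\<^sup>2 + B\<^sup>2) \<in> {0<..}"
    by (auto intro!: real_sqrt_gt_zero add_nonneg_pos)
  with \<open>\<kappa>\<^sub>p = \<kappa>\<^sub>m\<close> have "sqrt (A\<^sub>p\<^sup>2 + B\<^sup>2) = sqrt (A\<^sub>m\<^sup>2 + B\<^sup>2)"
    unfolding \<kappa>\<^sub>p_def \<kappa>\<^sub>m_def by (rule inj_onD[OF inj_on_kappa])
  then have "A\<^sub>p\<^sup>2 = A\<^sub>m\<^sup>2"
    by simp
  then have "16 * \<theta> * r * h * cos \<Psi> = 0"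
    by (simp add: A\<^sub>p_def A\<^sub>m_def power2_eq_square algebra_simps)
  then show False
    using assms by simp
qed

lemma self_consistent_iff_axes:
  fixes \<theta> h r \<Psi> :: real
  assumes "\<theta> > 0" "h > 0" "r > 0"
  shows "self_consistent \<theta> h r \<Psi> \<longleftrightarrow>
    (sin \<Psi> = 0 \<and>
      r = (h + \<theta> * r) * kappa \<bar>2 * (h + \<theta> * r)\<bar> - (h - \<theta> * r) * kappa \<bar>2 * (h - \<theta> * r)\<bar>)
    \<or> (cos \<Psi> = 0 \<and> r = 2 * \<theta> * r * kappa (2 * sqrt (h\<^sup>2 + \<theta>\<^sup>2 * r\<^sup>2)))"
proof -
  have "\<not> (sin \<Psi> = 0 \<and> cos \<Psi> = 0)"
    using sin_zero_abs_cos_one by fastforce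
  then show ?thesis
    using self_consistent_sin_eq_0 self_consistent_cos_eq_0 not_self_consistent_off_axes[OF assms]
    by blast
qed

lemma sin_eq_0_iff_on_circle:
  fixes \<Psi> :: real
  assumes "0 \<le> \<Psi>" "\<Psi> < 2 * pi"
  shows "sin \<Psi> = 0 \<longleftrightarrow> \<Psi> = 0 \<or> \<Psi> = pi"
proof
  assume "sin \<Psi> = 0"
  then obtain i :: int where i: "\<Psi> = i * pi"
    by (auto simp: sin_zero_iff_int2)
  then have "0 \<le> i * pi" "i * pi < 2 * pi"
    using assms by simp_all
  then have "0 \<le> i" "i < 2"
    using pi_gt_zero by (auto simp: zero_le_mult_iff mult_less_cancel_right)
  then have "i = 0 \<or> i = 1"
    by auto
  then show "\<Psi> = 0 \<or> \<Psi> = pi"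
    using i by auto
qed auto

lemma cos_eq_0_iff_on_circle:
  fixes \<Psi> :: real
  assumes "0 \<le> \<Psi>" "\<Psi> < 2 * pi"
  shows "cos \<Psi> = 0 \<longleftrightarrow> \<Psi> = pi / 2 \<or> \<Psi> = 3 * pi / 2"
proof
  assume "cos \<Psi> = 0"
  then obtain n :: int where n: "\<Psi> = n * pi + pi / 2"
    by (auto simp: cos_zero_iff_int2)
  then have "0 \<le> (n + 1/2) * pi" "(n + 1/2) * pi < 2 * pi"
    using assms by (simp_all add: algebra_simps)
  then have "-1 < n" "n < 2"
    using pi_gt_zero by (auto simp: zero_le_mult_iff mult_less_cancel_right)
  then have "n = 0 \<or> n = 1"
    by auto
  then show "\<Psi> = pi / 2 \<or> \<Psi> = 3 * pi / 2"
    using n by auto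
next
  have "cos (3 * pi / 2) = 0"
    unfolding cos_zero_iff_int2 by (rule exI[of _ 1]) simp
  moreover assume "\<Psi> = pi / 2 \<or> \<Psi> = 3 * pi / 2"
  ultimately show "cos \<Psi> = 0"
    by (elim disjE) (simp_all only: cos_pi_half)
qed

theorem proposition3:
  fixes \<theta> h r \<Psi> :: real
  assumes "\<theta> > 0" and "h > 0" and "r > 0" and "0 \<le> \<Psi>" and "\<Psi> < 2 * pi"
  shows "self_consistent \<theta> h r \<Psi> \<longleftrightarrow>
    ((\<Psi> = 0 \<or> \<Psi> = pi) \<and>
       r = (1/2) * (besselI 1 (2 * (h + \<theta> * r)) / besselI 0 (2 * (h + \<theta> * r))
                  - besselI 1 (2 * (h - \<theta> * r)) / besselI 0 (2 * (h - \<theta> * r))))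
    \<or> ((\<Psi> = pi / 2 \<or> \<Psi> = 3 * pi / 2) \<and>
       r = \<theta> * r / sqrt (h^2 + \<theta>^2 * r^2)
           * (besselI 1 (2 * sqrt (h^2 + \<theta>^2 * r^2)) / besselI 0 (2 * sqrt (h^2 + \<theta>^2 * r^2))))"
proof -
  have "sqrt (h\<^sup>2 + \<theta>\<^sup>2 * r\<^sup>2) > 0"
    using assms(2) by (simp add: add_pos_nonneg)
  then show ?thesis
    unfolding self_consistent_iff_axes[OF assms(1-3)] sin_eq_0_iff_on_circle[OF assms(4,5), symmetric]
      cos_eq_0_iff_on_circle[OF assms(4,5), symmetric] besselI_ratio
    by (simp add: algebra_simps)
qed

end
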